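(* Consider the following chemical reaction network (the ERK cascade without feedback in which MEK and ERK share the same phosphatase PH) with 21 species RAF, pRAF, MEK, pMEK, ppMEK, ERK, pERK, ppERK, RAS, RAFPH, PH, RAS-RAF, MEK-pRAF, pMEK-pRAF, ERK-ppMEK, pERK-ppMEK, RAF-RAFPH, ppMEK-PH, pMEK-PH, ppERK-PH, pERK-PH and 30 reactions with rate constants $k_1,\dots,k_{30}$: RAF + RAS $\underset{k_2}{\overset{k_1}{\rightleftarrows}}$ RAS-RAF $\overset{k_3}{\to}$ pRAF + RAS; pRAF + RAFPH $\underset{k_5}{\overset{k_4}{\rightleftarrows}}$ RAF-RAFPH $\overset{k_6}{\to}$ RAF + RAFPH; MEK + pRAF $\underset{k_8}{\overset{k_7}{\rightleftarrows}}$ MEK-pRAF $\overset{k_9}{\to}$ pMEK + pRAF $\underset{k_{11}}{\overset{k_{10}}{\rightleftarrows}}$ pMEK-pRAF $\overset{k_{12}}{\to}$ ppMEK + pRAF; ppMEK + PH $\underset{k_{14}}{\overset{k_{13}}{\rightleftarrows}}$ ppMEK-PH $\overset{k_{15}}{\to}$ pMEK + PH $\underset{k_{17}}{\overset{k_{16}}{\rightleftarrows}}$ pMEK-PH $\overset{k_{18}}{\to}$ MEK + PH; ERK + ppMEK $\underset{k_{20}}{\overset{k_{19}}{\rightleftarrows}}$ ERK-ppMEK $\overset{k_{21}}{\to}$ pERK + ppMEK $\underset{k_{23}}{\overset{k_{22}}{\rightleftarrows}}$ pERK-ppMEK $\overset{k_{24}}{\to}$ ppERK + ppMEK; ppERK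 + PH $\underset{k_{26}}{\overset{k_{25}}{\rightleftarrows}}$ ppERK-PH $\overset{k_{27}}{\to}$ pERK + PH $\underset{k_{29}}{\overset{k_{28}}{\rightleftarrows}}$ pERK-PH $\overset{k_{30}}{\to}$ ERK + PH. Then for every choice of positive rate constants $k\in\mathbb{R}^{30}_{>0}$, the associated mass-action system has toric steady states; in particular its steady state ideal is a binomial ideal.
   Context: For a reaction network with species concentrations $x=(x_1,\dots,x_s)$ and reactions $y\to y'$ (complexes $y,y'\in\mathbb{Z}_{\ge0}^s$, where a complex is a formal sum of species) with positive rate constants, the mass-action system is $\dot x = f(x;k)=\sum_{\text{reactions } y\to y'} k_{y\to y'}\, x^{y}(y'-y)$, whose components $f_1,\dots,f_s$ are polynomials in $x$. The steady state ideal is $J=\langle f_1,\dots,f_s\rangle\subseteq\mathbb{R}[x_1,\dots,x_s]$. The system has toric steady states if $J$ can be generated by binomials (polynomials with at most two terms) and $J$ admits nonnegative zeros. *)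

theory Defs
  imports Complex_Main "HOL-Library.Poly_Mapping"
begin

(* Multivariate real polynomials: finitely supported maps from monomials
   (exponent vectors nat \<Rightarrow>\<^sub>0 nat, variable x_i has index i) to real coefficients. *)
type_synonym mpoly = "(nat \<Rightarrow>\<^sub>0 nat) \<Rightarrow>\<^sub>0 real"

definition nspec :: nat where "nspec = 21"

definition in_ring :: "mpoly \<Rightarrow> bool" where
  "in_ring p \<longleftrightarrow> (\<forall>m \<in> Poly_Mapping.keys p. Poly_Mapping.keys m \<subseteq> {..<nspec})"

definition ideal_gen :: "mpoly set \<Rightarrow> mpoly set" where
  "ideal_gen F = {p. \<exists>fs gs. set fs \<subseteq> F \<and> length gs = length fs \<and>
      (\<forall>g \<in> set gs. in_ring g) \<and> p = sum_list (map2 (*) gs fs)}"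

definition binomial :: "mpoly \<Rightarrow> bool" where
  "binomial p \<longleftrightarrow> card (Poly_Mapping.keys p) \<le> 2"

definition eval :: "mpoly \<Rightarrow> (nat \<Rightarrow> real) \<Rightarrow> real" where
  "eval p x = (\<Sum>m \<in> Poly_Mapping.keys p. Poly_Mapping.lookup p m * (\<Prod>i \<in> Poly_Mapping.keys m. x i ^ Poly_Mapping.lookup m i))"

(* complex given as a list of species (with multiplicity) *)
definition cplx :: "nat list \<Rightarrow> (nat \<Rightarrow>\<^sub>0 nat)" where
  "cplx l = sum_list (map (\<lambda>i. Poly_Mapping.single i 1) l)"

(* mass-action species formation rate of species i, for a list of reactions
   (source, target) and rate constants k, reaction number r having rate constant k r *)
definition mass_action :: "((nat \<Rightarrow>\<^sub>0 nat) \<times> (nat \<Rightarrow>\<^sub>0 nat)) list \<Rightarrow> (nat \<Rightarrow> real) \<Rightarrow> nat \<Rightarrow> mpoly" where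
  "mass_action R k i = (\<Sum>r < length R.
     Poly_Mapping.single (fst (R ! r))
       (k r * (real (Poly_Mapping.lookup (snd (R ! r)) i) - real (Poly_Mapping.lookup (fst (R ! r)) i))))"

definition steady_state_ideal :: "((nat \<Rightarrow>\<^sub>0 nat) \<times> (nat \<Rightarrow>\<^sub>0 nat)) list \<Rightarrow> (nat \<Rightarrow> real) \<Rightarrow> mpoly set" where
  "steady_state_ideal R k = ideal_gen {mass_action R k i | i. i < nspec}"

definition has_toric_steady_states :: "((nat \<Rightarrow>\<^sub>0 nat) \<times> (nat \<Rightarrow>\<^sub>0 nat)) list \<Rightarrow> (nat \<Rightarrow> real) \<Rightarrow> bool" where
  "has_toric_steady_states R k \<longleftrightarrow>
     (\<exists>B. (\<forall>b \<in> B. in_ring b \<and> binomial b) \<and> ideal_gen B = steady_state_ideal R k) \<and>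
     (\<exists>x. (\<forall>i < nspec. 0 \<le> x i) \<and> (\<forall>p \<in> steady_state_ideal R k. eval p x = 0))"

(* Species indices:
   0 RAF, 1 pRAF, 2 MEK, 3 pMEK, 4 ppMEK, 5 ERK, 6 pERK, 7 ppERK, 8 RAS, 9 RAFPH, 10 PH,
   11 RAS-RAF, 12 MEK-pRAF, 13 pMEK-pRAF, 14 ERK-ppMEK, 15 pERK-ppMEK, 16 RAF-RAFPH,
   17 ppMEK-PH, 18 pMEK-PH, 19 ppERK-PH, 20 pERK-PH.
   Reaction number r (0-based) has rate constant k_{r+1} of the paper. *)
definition ERK_network :: "((nat \<Rightarrow>\<^sub>0 nat) \<times> (nat \<Rightarrow>\<^sub>0 nat)) list" where
  "ERK_network = map (\<lambda>(a, b). (cplx a, cplx b))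
    [ ([0,8],[11]), ([11],[0,8]), ([11],[1,8]),
      ([1,9],[16]), ([16],[1,9]), ([16],[0,9]),
      ([2,1],[12]), ([12],[2,1]), ([12],[3,1]),
      ([3,1],[13]), ([13],[3,1]), ([13],[4,1]),
      ([4,10],[17]), ([17],[4,10]), ([17],[3,10]),
      ([3,10],[18]), ([18],[3,10]), ([18],[2,10]),
      ([5,4],[14]), ([14],[5,4]), ([14],[6,4]),
      ([6,4],[15]), ([15],[6,4]), ([15],[7,4]),
      ([7,10],[19]), ([19],[7,10]), ([19],[6,10]),
      ([6,10],[20]), ([20],[6,10]), ([20],[5,10]) ]"

end

(* Each intermediate complex (species 11 to 20) is formed by one reaction and consumed by two
   reactions with the same source, so its formation rate is a binomial. Adding the rate of a free
   substrate to the rates of the intermediates it forms cancels all but two monomials, giving five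
   more binomials. The rates of the remaining species are then recovered from the conservation
   laws of RAF, MEK, ERK, RAS, RAFPH and PH, whose sums of rates vanish identically. So fifteen
   binomials generate the steady state ideal. Every monomial of every rate has positive degree,
   so the origin is a nonnegative zero. *)

theory Submission
  imports Defs
begin

section \<open>Ideals generated by a set of polynomials\<close>

lemma in_ring_mult:
  assumes "in_ring g" "in_ring h"
  shows "in_ring (g * h)"
  unfolding in_ring_def
proof
  fix m assume "m \<in> Poly_Mapping.keys (g * h)"
  then obtain a b where "m = a + b" "a \<in> Poly_Mapping.keys g" "b \<in> Poly_Mapping.keys h"
    using keys_mult by blast
  then show "Poly_Mapping.keys m \<subseteq> {..<nspec}"
    using assms keys_add[of a b] unfolding in_ring_def by blast
qed

lemma ideal_genI:
  "set fs \<subseteq> B \<Longrightarrow> length gs = length fs \<Longrightarrow> \<forall>g\<in>set gs. in_ring g \<Longrightarrow>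
    sum_list (map2 (*) gs fs) \<in> ideal_gen B"
  unfolding ideal_gen_def by blast

lemma ideal_gen_zero: "0 \<in> ideal_gen B"
  using ideal_genI[of "[]" B "[]"] by simp

lemma ideal_gen_inc: "f \<in> B \<Longrightarrow> f \<in> ideal_gen B"
  using ideal_genI[of "[f]" B "[1]"] by (simp add: in_ring_def)

lemma ideal_gen_add:
  assumes "p \<in> ideal_gen B" "q \<in> ideal_gen B"
  shows "p + q \<in> ideal_gen B"
proof -
  obtain fs gs where fs: "set fs \<subseteq> B" "length gs = length fs" "\<forall>g\<in>set gs. in_ring g"
    and p: "p = sum_list (map2 (*) gs fs)"
    using assms(1) unfolding ideal_gen_def by blast
  obtain fs' gs' where fs': "set fs' \<subseteq> B" "length gs' = length fs'" "\<forall>g\<in>set gs'. in_ring g"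
    and q: "q = sum_list (map2 (*) gs' fs')"
    using assms(2) unfolding ideal_gen_def by blast
  have "map2 (*) (gs @ gs') (fs @ fs') = map2 (*) gs fs @ map2 (*) gs' fs'"
    using fs(2) by simp
  then have "p + q = sum_list (map2 (*) (gs @ gs') (fs @ fs'))"
    by (simp add: p q)
  moreover have "sum_list (map2 (*) (gs @ gs') (fs @ fs')) \<in> ideal_gen B"
    using fs fs' by (intro ideal_genI) auto
  ultimately show ?thesis by simp
qed

lemma sum_list_map2_mult_left:
  fixes h :: "'a :: comm_semiring_0"
  shows "h * sum_list (map2 (*) gs fs) = sum_list (map2 (*) (map ((*) h) gs) fs)"
proof (induction gs arbitrary: fs)
  case (Cons g gs)
  then show ?case by (cases fs) (simp_all add: distrib_left mult.assoc)
qed simp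

lemma ideal_gen_mult:
  assumes "in_ring h" "p \<in> ideal_gen B"
  shows "h * p \<in> ideal_gen B"
proof -
  obtain fs gs where "set fs \<subseteq> B" "length gs = length fs" "\<forall>g\<in>set gs. in_ring g"
    "p = sum_list (map2 (*) gs fs)"
    using assms(2) unfolding ideal_gen_def by blast
  with assms(1) show ?thesis
    using ideal_genI[of fs B "map ((*) h) gs"] by (simp add: sum_list_map2_mult_left in_ring_mult)
qed

lemma ideal_gen_diff:
  assumes "p \<in> ideal_gen B" "q \<in> ideal_gen B"
  shows "p - q \<in> ideal_gen B"
proof -
  have "(-1) * q \<in> ideal_gen B"
    using assms(2) by (intro ideal_gen_mult) (simp_all add: in_ring_def)
  with assms(1) show ?thesis
    using ideal_gen_add by fastforce
qed

lemma ideal_gen_sum: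
  "finite T \<Longrightarrow> (\<And>i. i \<in> T \<Longrightarrow> f i \<in> ideal_gen B) \<Longrightarrow> sum f T \<in> ideal_gen B"
  by (induction T rule: finite_induct) (auto intro: ideal_gen_zero ideal_gen_add)

lemma ideal_gen_least:
  assumes "B \<subseteq> S" "0 \<in> S"
    and "\<And>p q. p \<in> S \<Longrightarrow> q \<in> S \<Longrightarrow> p + q \<in> S"
    and "\<And>g p. in_ring g \<Longrightarrow> p \<in> S \<Longrightarrow> g * p \<in> S"
  shows "ideal_gen B \<subseteq> S"
proof
  fix p assume "p \<in> ideal_gen B"
  then obtain fs gs where fs: "set fs \<subseteq> B" "length gs = length fs" "\<forall>g\<in>set gs. in_ring g"
    and p: "p = sum_list (map2 (*) gs fs)"
    unfolding ideal_gen_def by blast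
  have "sum_list (map2 (*) gs fs) \<in> S"
    using fs(2,1,3) by (induction gs fs rule: list_induct2) (use assms in auto)
  then show "p \<in> S" using p by simp
qed

lemma ideal_gen_subset: "B \<subseteq> ideal_gen C \<Longrightarrow> ideal_gen B \<subseteq> ideal_gen C"
  by (rule ideal_gen_least) (auto intro: ideal_gen_zero ideal_gen_add ideal_gen_mult)

lemma zero_notin_keys_mult:
  fixes f g :: mpoly
  assumes "0 \<notin> Poly_Mapping.keys f"
  shows "0 \<notin> Poly_Mapping.keys (g * f)"
proof
  assume "0 \<in> Poly_Mapping.keys (g * f)"
  then obtain a b where ab: "0 = a + b" "b \<in> Poly_Mapping.keys f"
    using keys_mult by blast
  then have "b \<noteq> 0" using assms by auto
  then obtain i where "Poly_Mapping.lookup b i \<noteq> 0"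
    by (metis lookup_zero poly_mapping_eqI)
  then have "Poly_Mapping.lookup (a + b) i \<noteq> 0"
    by (simp add: lookup_add)
  then show False using ab(1) by simp
qed

lemma ideal_gen_zero_notin_keys:
  assumes "\<And>f. f \<in> B \<Longrightarrow> 0 \<notin> Poly_Mapping.keys f" "p \<in> ideal_gen B"
  shows "0 \<notin> Poly_Mapping.keys p"
proof -
  have "ideal_gen B \<subseteq> {p. 0 \<notin> Poly_Mapping.keys p}"
  proof (rule ideal_gen_least)
    show "p + q \<in> {p. 0 \<notin> Poly_Mapping.keys p}"
      if "p \<in> {p. 0 \<notin> Poly_Mapping.keys p}" "q \<in> {p. 0 \<notin> Poly_Mapping.keys p}" for p q :: mpoly
      using that keys_add[of p q] by blast
    show "g * p \<in> {p. 0 \<notin> Poly_Mapping.keys p}" if "p \<in> {p. 0 \<notin> Poly_Mapping.keys p}" for g p :: mpoly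
      using that zero_notin_keys_mult by blast
  qed (use assms(1) in auto)
  with assms(2) show ?thesis by blast
qed

lemma eval_at_zero:
  assumes "0 \<notin> Poly_Mapping.keys p"
  shows "eval p (\<lambda>_. 0) = 0"
  unfolding eval_def
proof (intro sum.neutral ballI)
  fix m assume "m \<in> Poly_Mapping.keys p"
  then have "m \<noteq> 0" using assms by auto
  then obtain i where i: "i \<in> Poly_Mapping.keys m"
    by (metis ex_in_conv keys_eq_empty)
  then have "(0::real) ^ Poly_Mapping.lookup m i = 0"
    by (simp add: in_keys_iff)
  then have "(\<Prod>i\<in>Poly_Mapping.keys m. (0::real) ^ Poly_Mapping.lookup m i) = 0"
    using i by (intro prod_zero) auto
  then show "Poly_Mapping.lookup p m * (\<Prod>i\<in>Poly_Mapping.keys m. 0 ^ Poly_Mapping.lookup m i) = 0"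
    by simp
qed

section \<open>Linear combinations of species formation rates\<close>

definition rate_sum ::
  "((nat \<Rightarrow>\<^sub>0 nat) \<times> (nat \<Rightarrow>\<^sub>0 nat)) list \<Rightarrow> (nat \<Rightarrow> real) \<Rightarrow> nat set \<Rightarrow> mpoly" where
  "rate_sum R k S = (\<Sum>i\<in>S. mass_action R k i)"

definition net_change :: "nat list \<times> nat list \<Rightarrow> nat set \<Rightarrow> real" where
  "net_change c S = (\<Sum>i\<in>S. real (count_list (snd c) i) - real (count_list (fst c) i))"

lemma lookup_cplx: "Poly_Mapping.lookup (cplx l) i = count_list l i"
  by (induction l) (auto simp: cplx_def lookup_add lookup_single when_def)

lemma keys_cplx: "Poly_Mapping.keys (cplx l) = set l"
  by (auto simp: in_keys_iff lookup_cplx count_list_0_iff)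

lemma single_sum: "Poly_Mapping.single m (sum f A) = (\<Sum>x\<in>A. Poly_Mapping.single m (f x))"
  by (induction A rule: infinite_finite_induct) (auto simp: single_add)

lemma rate_sum_network:
  "rate_sum (map (\<lambda>(a, b). (cplx a, cplx b)) L) k S =
    (\<Sum>r<length L. Poly_Mapping.single (cplx (fst (L ! r))) (k r * net_change (L ! r) S))"
  unfolding rate_sum_def mass_action_def net_change_def
  by (subst sum.swap) (simp add: case_prod_beta lookup_cplx single_sum sum_distrib_left)

lemma keys_rate_sum_network:
  "Poly_Mapping.keys (rate_sum (map (\<lambda>(a, b). (cplx a, cplx b)) L) k S)
    \<subseteq> cplx ` fst ` {c \<in> set L. net_change c S \<noteq> 0}"
proof
  fix m assume "m \<in> Poly_Mapping.keys (rate_sum (map (\<lambda>(a, b). (cplx a, cplx b)) L) k S)"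
  then obtain r where "r < length L"
    and "m \<in> Poly_Mapping.keys (Poly_Mapping.single (cplx (fst (L ! r))) (k r * net_change (L ! r) S))"
    unfolding rate_sum_network
    using keys_sum[of "\<lambda>r. Poly_Mapping.single (cplx (fst (L ! r))) (k r * net_change (L ! r) S)"]
    by blast
  then show "m \<in> cplx ` fst ` {c \<in> set L. net_change c S \<noteq> 0}"
    by (auto split: if_splits)
qed

lemma binomial_rate_sum_network:
  assumes "card (set (map fst (filter (\<lambda>c. net_change c S \<noteq> 0) L))) \<le> 2"
  shows "binomial (rate_sum (map (\<lambda>(a, b). (cplx a, cplx b)) L) k S)"
proof -
  have "card (Poly_Mapping.keys (rate_sum (map (\<lambda>(a, b). (cplx a, cplx b)) L) k S))
      \<le> card (cplx ` fst ` {c \<in> set L. net_change c S \<noteq> 0})"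
    by (intro card_mono keys_rate_sum_network) simp
  also have "\<dots> \<le> card (fst ` {c \<in> set L. net_change c S \<noteq> 0})"
    by (intro card_image_le) simp
  finally show ?thesis
    using assms unfolding binomial_def by simp
qed

lemma rate_sum_network_eq_0:
  assumes "\<forall>c\<in>set L. net_change c S = 0"
  shows "rate_sum (map (\<lambda>(a, b). (cplx a, cplx b)) L) k S = 0"
  unfolding rate_sum_network by (rule sum.neutral) (simp add: assms)

lemma in_ring_rate_sum_network:
  assumes "\<And>c. c \<in> set L \<Longrightarrow> set (fst c) \<subseteq> {..<nspec}"
  shows "in_ring (rate_sum (map (\<lambda>(a, b). (cplx a, cplx b)) L) k S)"
  unfolding in_ring_def
proof
  fix m assume "m \<in> Poly_Mapping.keys (rate_sum (map (\<lambda>(a, b). (cplx a, cplx b)) L) k S)"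
  then obtain c where "c \<in> set L" "m = cplx (fst c)"
    using keys_rate_sum_network[of L k S] by blast
  then show "Poly_Mapping.keys m \<subseteq> {..<nspec}"
    using assms by (simp add: keys_cplx)
qed

lemma zero_notin_keys_rate_sum_network:
  assumes "\<And>c. c \<in> set L \<Longrightarrow> fst c \<noteq> []"
  shows "0 \<notin> Poly_Mapping.keys (rate_sum (map (\<lambda>(a, b). (cplx a, cplx b)) L) k S)"
proof
  assume "0 \<in> Poly_Mapping.keys (rate_sum (map (\<lambda>(a, b). (cplx a, cplx b)) L) k S)"
  then have "0 \<in> cplx ` fst ` {c \<in> set L. net_change c S \<noteq> 0}"
    using keys_rate_sum_network by (rule subsetD[rotated])
  then obtain c where "c \<in> set L" "cplx (fst c) = 0"
    by auto
  then show False
    using assms keys_cplx[of "fst c"] by simp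
qed

lemma mass_action_in_ideal_gen:
  assumes "finite T" "i \<in> T" "rate_sum R k T \<in> ideal_gen B"
    and "\<And>j. j \<in> T - {i} \<Longrightarrow> mass_action R k j \<in> ideal_gen B"
  shows "mass_action R k i \<in> ideal_gen B"
proof -
  have "mass_action R k i = rate_sum R k T - rate_sum R k (T - {i})"
    using assms(1,2) unfolding rate_sum_def by (simp add: sum.remove)
  also have "\<dots> \<in> ideal_gen B"
    using assms unfolding rate_sum_def[of R k "T - {i}"]
    by (intro ideal_gen_diff ideal_gen_sum) auto
  finally show ?thesis .
qed

lemma ideal_gen_rate_sums_subset:
  assumes "\<And>S. S \<in> \<S> \<Longrightarrow> finite S \<and> S \<subseteq> {..<nspec}"
  shows "ideal_gen (rate_sum R k ` \<S>) \<subseteq> steady_state_ideal R k"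
  unfolding steady_state_ideal_def
proof (rule ideal_gen_subset, rule image_subsetI)
  fix S assume "S \<in> \<S>"
  with assms show "rate_sum R k S \<in> ideal_gen {mass_action R k i |i. i < nspec}"
    unfolding rate_sum_def by (intro ideal_gen_sum ideal_gen_inc) auto
qed

lemma steady_state_ideal_vanishes_at_zero:
  assumes "\<And>i. i < nspec \<Longrightarrow> 0 \<notin> Poly_Mapping.keys (mass_action R k i)"
    and "p \<in> steady_state_ideal R k"
  shows "eval p (\<lambda>_. 0) = 0"
proof (rule eval_at_zero)
  show "0 \<notin> Poly_Mapping.keys p"
    using assms(2) unfolding steady_state_ideal_def
  proof (rule ideal_gen_zero_notin_keys[rotated])
    show "0 \<notin> Poly_Mapping.keys f" if "f \<in> {mass_action R k i |i. i < nspec}" for f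
      using that assms(1) by blast
  qed
qed

section \<open>The ERK cascade\<close>

definition ERK_binomial_blocks :: "nat set set" where
  "ERK_binomial_blocks =
    {{11}, {12}, {13}, {14}, {15}, {16}, {17}, {18}, {19}, {20},
     {0, 11}, {2, 12}, {4, 14, 15, 17}, {5, 14}, {7, 19}}"

(* total amounts of RAF, MEK, ERK, RAS, RAFPH and PH *)
definition ERK_conservation_blocks :: "nat set set" where
  "ERK_conservation_blocks =
    {{0, 1, 11, 12, 13, 16}, {2, 3, 4, 12, 13, 14, 15, 17, 18}, {5, 6, 7, 14, 15, 19, 20},
     {8, 11}, {9, 16}, {10, 17, 18, 19, 20}}"

lemma binomial_ERK_block:
  assumes "S \<in> ERK_binomial_blocks"
  shows "binomial (rate_sum ERK_network k S)"
  using assms unfolding ERK_binomial_blocks_def ERK_network_def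
  by (elim insertE emptyE) (rule binomial_rate_sum_network, simp add: net_change_def)+

lemma rate_sum_ERK_conservation_block:
  assumes "S \<in> ERK_conservation_blocks"
  shows "rate_sum ERK_network k S = 0"
  using assms unfolding ERK_conservation_blocks_def ERK_network_def
  by (elim insertE emptyE) (rule rate_sum_network_eq_0, simp add: net_change_def)+

lemma in_ring_rate_sum_ERK: "in_ring (rate_sum ERK_network k S)"
  unfolding ERK_network_def by (rule in_ring_rate_sum_network) (auto simp: nspec_def)

lemma zero_notin_keys_rate_sum_ERK: "0 \<notin> Poly_Mapping.keys (rate_sum ERK_network k S)"
  unfolding ERK_network_def by (rule zero_notin_keys_rate_sum_network) auto

lemma mass_action_ERK_in_ideal_gen:
  assumes "i < nspec"
  shows "mass_action ERK_network k i \<in> ideal_gen (rate_sum ERK_network k ` ERK_binomial_blocks)"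
proof -
  let ?I = "ideal_gen (rate_sum ERK_network k ` ERK_binomial_blocks)"
  let ?f = "mass_action ERK_network k"
  have block: "rate_sum ERK_network k T \<in> ?I"
    if "T \<in> ERK_binomial_blocks \<union> ERK_conservation_blocks" for T
    using that by (auto simp: rate_sum_ERK_conservation_block intro: ideal_gen_inc ideal_gen_zero)
  have step: "?f i \<in> ?I"
    if "T \<in> ERK_binomial_blocks \<union> ERK_conservation_blocks" "i \<in> T"
      "\<And>j. j \<in> T - {i} \<Longrightarrow> ?f j \<in> ?I" for T i
  proof (rule mass_action_in_ideal_gen[OF _ that(2) block[OF that(1)] that(3)])
    show "finite T"
      using that(1) by (auto simp: ERK_binomial_blocks_def ERK_conservation_blocks_def)
  qed
  have intermediates: "?f j \<in> ?I" if "j \<in> {11, 12, 13, 14, 15, 16, 17, 18, 19, 20}" for j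
    by (rule step[of "{j}"]) (use that in \<open>auto simp: ERK_binomial_blocks_def\<close>)
  have RAF: "?f 0 \<in> ?I"
    by (rule step[of "{0, 11}"], simp add: ERK_binomial_blocks_def) (auto intro: intermediates)
  have MEK: "?f 2 \<in> ?I"
    by (rule step[of "{2, 12}"], simp add: ERK_binomial_blocks_def) (auto intro: intermediates)
  have ppMEK: "?f 4 \<in> ?I"
    by (rule step[of "{4, 14, 15, 17}"], simp add: ERK_binomial_blocks_def)
      (auto intro: intermediates)
  have ERK: "?f 5 \<in> ?I"
    by (rule step[of "{5, 14}"], simp add: ERK_binomial_blocks_def) (auto intro: intermediates)
  have ppERK: "?f 7 \<in> ?I"
    by (rule step[of "{7, 19}"], simp add: ERK_binomial_blocks_def) (auto intro: intermediates)
  have pRAF: "?f 1 \<in> ?I"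
    by (rule step[of "{0, 1, 11, 12, 13, 16}"], simp add: ERK_conservation_blocks_def)
      (auto intro: intermediates RAF)
  have pMEK: "?f 3 \<in> ?I"
    by (rule step[of "{2, 3, 4, 12, 13, 14, 15, 17, 18}"], simp add: ERK_conservation_blocks_def)
      (auto intro: intermediates MEK ppMEK)
  have pERK: "?f 6 \<in> ?I"
    by (rule step[of "{5, 6, 7, 14, 15, 19, 20}"], simp add: ERK_conservation_blocks_def)
      (auto intro: intermediates ERK ppERK)
  have RAS: "?f 8 \<in> ?I"
    by (rule step[of "{8, 11}"], simp add: ERK_conservation_blocks_def) (auto intro: intermediates)
  have RAFPH: "?f 9 \<in> ?I"
    by (rule step[of "{9, 16}"], simp add: ERK_conservation_blocks_def) (auto intro: intermediates)
  have PH: "?f 10 \<in> ?I"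
    by (rule step[of "{10, 17, 18, 19, 20}"], simp add: ERK_conservation_blocks_def)
      (auto intro: intermediates)
  have "i \<in> {..<21}"
    using assms by (simp add: nspec_def)
  then show ?thesis
    using RAF pRAF MEK pMEK ppMEK ERK pERK ppERK RAS RAFPH PH intermediates
    by (auto simp: lessThan_nat_numeral)
qed

theorem mainTheorem3:
  fixes k :: "nat \<Rightarrow> real"
  assumes "\<forall>r < 30. 0 < k r"
  shows "has_toric_steady_states ERK_network k \<and>
         (\<exists>B. (\<forall>b \<in> B. in_ring b \<and> binomial b) \<and> ideal_gen B = steady_state_ideal ERK_network k)"
proof -
  let ?B = "rate_sum ERK_network k ` ERK_binomial_blocks"
  have generators: "\<forall>b \<in> ?B. in_ring b \<and> binomial b"
    using binomial_ERK_block in_ring_rate_sum_ERK by blast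
  have "ideal_gen ?B \<subseteq> steady_state_ideal ERK_network k"
    by (rule ideal_gen_rate_sums_subset) (auto simp: ERK_binomial_blocks_def nspec_def)
  moreover have "steady_state_ideal ERK_network k \<subseteq> ideal_gen ?B"
    unfolding steady_state_ideal_def
    by (rule ideal_gen_subset) (use mass_action_ERK_in_ideal_gen in blast)
  ultimately have binomial_ideal: "ideal_gen ?B = steady_state_ideal ERK_network k"
    by (rule subset_antisym)
  have "eval p (\<lambda>_. 0) = 0" if "p \<in> steady_state_ideal ERK_network k" for p
  proof (rule steady_state_ideal_vanishes_at_zero[OF _ that])
    show "0 \<notin> Poly_Mapping.keys (mass_action ERK_network k i)" for i
      using zero_notin_keys_rate_sum_ERK[of k "{i}"] by (simp add: rate_sum_def)
  qed
  then have nonnegative_zero: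
    "\<exists>x. (\<forall>i < nspec. 0 \<le> x i) \<and> (\<forall>p \<in> steady_state_ideal ERK_network k. eval p x = 0)"
    by (intro exI[of _ "\<lambda>_. 0"]) simp
  show ?thesis
    unfolding has_toric_steady_states_def using generators binomial_ideal nonnegative_zero by blast
qed

end
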